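(* Let $n\geq 3$ and let $\tau$ be a maximal simplex of $\mathrm{VR}(\mathbb{Z}^n;2)$. Then one of the following holds: (i) $\tau=N[x]$ for some $x\in\mathbb{Z}^n$; (ii) $\tau=\{x,x^{i_0},x^{j_0},x^{i_0,j_0}\}$ for some $x\in\mathbb{Z}^n$ and $i_0,j_0\in[n]^{\pm}$; (iii) $\tau=\{x,x^{i_0,j_0},x^{j_0,k_0},x^{i_0,k_0}\}$ for some $x\in\mathbb{Z}^n$ and $i_0,j_0,k_0\in[n]^{\pm}$.
   Context: $\mathbb{Z}^n$ carries the Manhattan metric $d(x,y)=\sum_{i=1}^n|x_i-y_i|$; $\mathrm{VR}(X;r)$ is the simplicial complex on $X$ whose simplices are finite subsets of diameter at most $r$. Write $[n]=\{1,\ldots,n\}$, $[-n]=\{-1,\ldots,-n\}$, $[n]^{\pm}=[n]\cup[-n]$. For $x\in\mathbb{Z}^n$ and $i_1,\ldots,i_k\in[n]^{\pm}$ with pairwise distinct absolute values, $x^{i_1,\ldots,i_k}\in\mathbb{Z}^n$ is obtained from $x$ by adding $1$ to the $j$-th coordinate for each $j\in\{i_1,\ldots,i_k\}\cap[n]$ and subtracting $1$ from the $j$-th coordinate for each $j$ with $-j\in\{i_1,\ldots,i_k\}$, other coordinates unchanged. $N[x]=\{y\in\mathbb{Z}^n: d(x,y)\leq 1\}$ is the closed neighbourhood of $x$ in the grid graph. *)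

theory Defs
  imports "HOL-Analysis.Analysis"
begin

text \<open>Points of Z^n are modelled as int ^ 'n (n = CARD('n)).
  A signed index in [n]^pm is a pair (i, s) with i a coordinate and
  s = True meaning +i, s = False meaning -i.\<close>

definition manh :: "int ^ 'n \<Rightarrow> int ^ 'n \<Rightarrow> int" where
  "manh x y = (\<Sum>i\<in>UNIV. \<bar>x $ i - y $ i\<bar>)"

definition vr_simplex :: "int \<Rightarrow> (int ^ 'n) set \<Rightarrow> bool" where
  "vr_simplex r \<sigma> \<longleftrightarrow> finite \<sigma> \<and> \<sigma> \<noteq> {} \<and> (\<forall>a\<in>\<sigma>. \<forall>b\<in>\<sigma>. manh a b \<le> r)"

definition vr_maximal_simplex :: "int \<Rightarrow> (int ^ 'n) set \<Rightarrow> bool" where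
  "vr_maximal_simplex r \<tau> \<longleftrightarrow> vr_simplex r \<tau> \<and>
     (\<forall>\<sigma>. vr_simplex r \<sigma> \<and> \<tau> \<subseteq> \<sigma> \<longrightarrow> \<sigma> = \<tau>)"

definition sshift :: "int ^ 'n \<Rightarrow> 'n \<times> bool \<Rightarrow> int ^ 'n" where
  "sshift x a = (\<chi> j. if j = fst a then (if snd a then x $ j + 1 else x $ j - 1) else x $ j)"

definition closed_nbhd :: "int ^ 'n \<Rightarrow> (int ^ 'n) set" where
  "closed_nbhd x = {y. manh x y \<le> 1}"

end

theory Submission
  imports Defs
begin

(* Colour the points of Z^n by the parity of their coordinate sum. Within a set of diameter
   at most 2, points of different colours are at distance exactly 1 and distinct points of the
   same colour at distance exactly 2.
   If both colours occur and neither colour class is a single point, take y, w of one colour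
   and z, v of the other: the second class consists of common neighbours of y and
   w = y + e_a + e_b (with e_a = unit_vec a), i.e. of y + e_a and y + e_b, and symmetrically
   the first class lies in {y, w}; this is a unit square. If only one colour occurs, every
   point other than a fixed p is p + e_a + e_b, and distance at most 2 forces the unordered
   pairs {a, b} to intersect pairwise; such a family is a star, giving a closed neighbourhood,
   or a triangle, giving {p, p + e_a + e_b, p + e_b + e_c, p + e_a + e_c}.
   All three shapes are simplices, so a maximal simplex equals the shape containing it. *)

definition opposite :: "'n \<times> bool \<Rightarrow> 'n \<times> bool" where
  "opposite a = (fst a, \<not> snd a)"

definition unit_vec :: "'n \<times> bool \<Rightarrow> int ^ 'n" where
  "unit_vec a = (\<chi> j. if j = fst a then (if snd a then 1 else -1) else 0)"

definition norm1 :: "int ^ 'n \<Rightarrow> int" where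
  "norm1 d = (\<Sum>i\<in>UNIV. \<bar>d $ i\<bar>)"

lemma unit_vec_nth: "unit_vec a $ j = (if j = fst a then (if snd a then 1 else -1) else 0)"
  by (simp add: unit_vec_def)

lemma sshift_eq_add: "sshift x a = x + unit_vec a"
  by (simp add: sshift_def unit_vec_def vec_eq_iff)

lemma opposite_opposite [simp]: "opposite (opposite a) = a"
  by (simp add: opposite_def)

lemma opposite_neq [simp]: "opposite a \<noteq> a" "a \<noteq> opposite a"
  by (simp_all add: opposite_def prod_eq_iff)

lemma opposite_eq_iff: "opposite a = b \<longleftrightarrow> a = opposite b"
  by (auto simp: opposite_def)

lemma fst_eq_iff: "fst a = fst b \<longleftrightarrow> b = a \<or> b = opposite a"
  by (cases a; cases b) (auto simp: opposite_def)

lemma uminus_unit_vec: "- unit_vec a = unit_vec (opposite a)"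
  by (simp add: vec_eq_iff unit_vec_nth opposite_def)

lemma unit_vec_inject [simp]: "unit_vec a = unit_vec b \<longleftrightarrow> a = b"
proof
  assume "unit_vec a = unit_vec b"
  then have "unit_vec a $ fst a = unit_vec b $ fst a" by simp
  then show "a = b" by (cases a; cases b) (auto simp: unit_vec_nth split: if_splits)
qed simp

lemma unit_vec_add_eq_0_iff: "unit_vec a + unit_vec b = 0 \<longleftrightarrow> b = opposite a"
  by (metis add.inverse_unique neg_eq_iff_add_eq_0 uminus_unit_vec unit_vec_inject)

lemma manh_eq_norm1: "manh x y = norm1 (y - x)"
  unfolding manh_def norm1_def by (intro sum.cong) auto

lemma manh_commute: "manh x y = manh y x"
  unfolding manh_def by (intro sum.cong) auto

lemma norm1_nonneg: "norm1 d \<ge> 0"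
  unfolding norm1_def by (simp add: sum_nonneg)

lemma norm1_eq_0_iff: "norm1 d = 0 \<longleftrightarrow> d = 0"
  unfolding norm1_def by (auto simp: sum_nonneg_eq_0_iff vec_eq_iff)

lemma norm1_zero [simp]: "norm1 0 = 0"
  by (simp add: norm1_eq_0_iff)

lemma norm1_add_le: "norm1 (d + e) \<le> norm1 d + norm1 e"
  unfolding norm1_def by (simp add: sum.distrib[symmetric] sum_mono abs_triangle_ineq)

lemma norm1_unit_vec [simp]: "norm1 (unit_vec a) = 1"
proof -
  have "\<bar>unit_vec a $ i\<bar> = (if i = fst a then 1 else 0)" for i
    by (simp add: unit_vec_nth)
  then show ?thesis by (simp add: norm1_def)
qed

lemma norm1_split: "norm1 d = \<bar>d $ i\<bar> + (\<Sum>j\<in>UNIV - {i}. \<bar>d $ j\<bar>)"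
  unfolding norm1_def by (simp add: sum.remove)

lemma norm1_diff_unit_vec:
  assumes "d $ i \<noteq> 0"
  shows "norm1 (d - unit_vec (i, d $ i > 0)) = norm1 d - 1"
proof -
  have "(\<Sum>j\<in>UNIV - {i}. \<bar>(d - unit_vec (i, d $ i > 0)) $ j\<bar>) = (\<Sum>j\<in>UNIV - {i}. \<bar>d $ j\<bar>)"
    by (intro sum.cong) (auto simp: unit_vec_nth)
  moreover have "\<bar>(d - unit_vec (i, d $ i > 0)) $ i\<bar> = \<bar>d $ i\<bar> - 1"
    using assms by (auto simp: unit_vec_nth)
  ultimately show ?thesis
    using norm1_split[of d i] norm1_split[of "d - unit_vec (i, d $ i > 0)" i] by simp
qed

lemma unit_vec_decomposition:
  assumes "norm1 d = int k"
  shows "\<exists>as. length as = k \<and> d = (\<Sum>a\<leftarrow>as. unit_vec a)"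
  using assms
proof (induction k arbitrary: d)
  case 0
  then show ?case by (auto simp: norm1_eq_0_iff)
next
  case (Suc k)
  then obtain i where i: "d $ i \<noteq> 0"
    by (metis norm1_eq_0_iff of_nat_eq_0_iff vec_eq_iff zero_index nat.distinct(1))
  define a where "a = (i, d $ i > 0)"
  have "norm1 (d - unit_vec a) = int k"
    using norm1_diff_unit_vec[OF i] Suc.prems by (simp add: a_def)
  then obtain as where "length as = k" "d - unit_vec a = (\<Sum>a\<leftarrow>as. unit_vec a)"
    using Suc.IH by blast
  then have "length (a # as) = Suc k \<and> d = (\<Sum>a\<leftarrow>a # as. unit_vec a)"
    by (simp add: algebra_simps)
  then show ?case by blast
qed

lemma sum_list_vec_nth: "(\<Sum>a\<leftarrow>as. f a) $ i = (\<Sum>a\<leftarrow>as. f a $ i)"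
  by (induction as) simp_all

lemma norm1_sum_unit_vec:
  assumes "\<forall>a\<in>set as. opposite a \<notin> set as"
  shows "norm1 (\<Sum>a\<leftarrow>as. unit_vec a) = int (length as)"
proof -
  have coord: "\<bar>(\<Sum>a\<leftarrow>as. unit_vec a) $ i\<bar> = (\<Sum>a\<leftarrow>as. \<bar>unit_vec a $ i\<bar>)" for i
  proof -
    \<comment> \<open>no cancellation: all summands at coordinate i have the sign \<sigma>\<close>
    define \<sigma> :: int where "\<sigma> = (if \<exists>a\<in>set as. fst a = i \<and> \<not> snd a then -1 else 1)"
    have sign: "\<sigma> * unit_vec a $ i = \<bar>unit_vec a $ i\<bar>" if "a \<in> set as" for a
      using assms that by (cases a) (auto simp: \<sigma>_def unit_vec_nth opposite_def)
    have "\<bar>\<sigma>\<bar> = 1" by (simp add: \<sigma>_def)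
    then have "\<bar>(\<Sum>a\<leftarrow>as. unit_vec a) $ i\<bar> = \<bar>\<sigma> * (\<Sum>a\<leftarrow>as. unit_vec a $ i)\<bar>"
      by (simp add: abs_mult sum_list_vec_nth)
    also have "\<sigma> * (\<Sum>a\<leftarrow>as. unit_vec a $ i) = (\<Sum>a\<leftarrow>as. \<sigma> * unit_vec a $ i)"
      by (rule sum_list_const_mult[symmetric])
    also have "\<dots> = (\<Sum>a\<leftarrow>as. \<bar>unit_vec a $ i\<bar>)"
      using sign by (simp cong: map_cong)
    also have "\<bar>\<dots>\<bar> = (\<Sum>a\<leftarrow>as. \<bar>unit_vec a $ i\<bar>)"
      by (intro abs_of_nonneg sum_list_nonneg) auto
    finally show ?thesis .
  qed
  have "norm1 (\<Sum>a\<leftarrow>as. unit_vec a) = (\<Sum>i\<in>UNIV. \<Sum>a\<leftarrow>as. \<bar>unit_vec a $ i\<bar>)"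
    by (simp add: norm1_def coord)
  also have "\<dots> = (\<Sum>a\<leftarrow>as. norm1 (unit_vec a))"
    unfolding norm1_def by (induction as) (simp_all add: sum.distrib)
  also have "\<dots> = int (length as)"
    by (simp add: sum_list_triv)
  finally show ?thesis .
qed

lemma unit_pairs_share:
  assumes "norm1 (unit_vec a + unit_vec b - (unit_vec e + unit_vec f)) \<le> 2"
    and "b \<noteq> opposite a" and "f \<noteq> opposite e"
  shows "a \<in> {e, f} \<or> b \<in> {e, f}"
proof (rule ccontr)
  assume "\<not> ?thesis"
  then have "\<forall>c\<in>set [a, b, opposite e, opposite f]. opposite c \<notin> set [a, b, opposite e, opposite f]"
    using assms(2,3) by (auto simp: opposite_eq_iff)
  then have "norm1 (\<Sum>c\<leftarrow>[a, b, opposite e, opposite f]. unit_vec c) = 4"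
    by (subst norm1_sum_unit_vec) simp_all
  with assms(1) show False
    by (simp add: uminus_unit_vec[symmetric] algebra_simps)
qed

lemma unit_pair_eq:
  assumes "unit_vec a + unit_vec b = unit_vec c + unit_vec d" and "b \<noteq> opposite a"
  shows "(a = c \<and> b = d) \<or> (a = d \<and> b = c)"
proof -
  have "d \<noteq> opposite c"
    using assms by (simp add: unit_vec_add_eq_0_iff[symmetric])
  then have "a \<in> {c, d} \<or> b \<in> {c, d}"
    using assms by (intro unit_pairs_share) simp_all
  with assms(1) show ?thesis
    by (auto simp: algebra_simps)
qed

lemma manh_self [simp]: "manh x x = 0"
  by (simp add: manh_eq_norm1 norm1_eq_0_iff)

lemma manh_nonneg: "manh x y \<ge> 0"
  by (simp add: manh_eq_norm1 norm1_nonneg)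

lemma manh_eq_0_iff: "manh x y = 0 \<longleftrightarrow> x = y"
  by (auto simp: manh_eq_norm1 norm1_eq_0_iff)

lemma manh_triangle: "manh x y \<le> manh x z + manh z y"
  using norm1_add_le[of "y - z" "z - x"] by (simp add: manh_eq_norm1 add.commute)

lemma manh_add_unit_vec [simp]: "manh x (x + unit_vec a) = 1"
  by (simp add: manh_eq_norm1)

lemma manh_eq_1E:
  assumes "manh x y = 1"
  obtains a where "y = x + unit_vec a"
proof -
  obtain as where "length as = 1" "y - x = (\<Sum>a\<leftarrow>as. unit_vec a)"
    using unit_vec_decomposition[of "y - x" 1] assms by (auto simp: manh_eq_norm1)
  then show ?thesis
    using that by (cases as) (auto simp: algebra_simps)
qed

lemma manh_eq_2E:
  assumes "manh x y = 2"
  obtains a b where "y = x + unit_vec a + unit_vec b" and "b \<noteq> opposite a"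
proof -
  obtain as where "length as = 2" "y - x = (\<Sum>a\<leftarrow>as. unit_vec a)"
    using unit_vec_decomposition[of "y - x" 2] assms by (auto simp: manh_eq_norm1)
  then obtain a b where ab: "y = x + unit_vec a + unit_vec b"
    by (auto simp: algebra_simps numeral_2_eq_2 length_Suc_conv)
  moreover have "b \<noteq> opposite a"
    using ab assms by (auto simp: unit_vec_add_eq_0_iff[symmetric] add.assoc)
  ultimately show ?thesis using that by blast
qed

lemma common_neighbour:
  assumes "b \<noteq> opposite a" and "manh x t = 1" and "manh (x + unit_vec a + unit_vec b) t = 1"
  shows "t = x + unit_vec a \<or> t = x + unit_vec b"
proof -
  obtain e where e: "t = x + unit_vec e"
    using assms(2) by (rule manh_eq_1E)
  obtain f where "x + unit_vec a + unit_vec b = t + unit_vec f"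
    using assms(3) by (metis manh_commute manh_eq_1E)
  with e have "unit_vec a + unit_vec b = unit_vec e + unit_vec f"
    by (simp add: algebra_simps)
  with e assms(1) show ?thesis
    by (auto dest: unit_pair_eq)
qed

definition coord_sum :: "int ^ 'n \<Rightarrow> int" where
  "coord_sum x = (\<Sum>i\<in>UNIV. x $ i)"

lemma even_manh_iff: "even (manh x y) \<longleftrightarrow> (even (coord_sum x) \<longleftrightarrow> even (coord_sum y))"
proof -
  have "even (\<bar>x $ i - y $ i\<bar> - (x $ i - y $ i))" for i
    by (cases "x $ i \<le> y $ i") auto
  then have "even (manh x y - (coord_sum x - coord_sum y))"
    unfolding manh_def coord_sum_def by (simp add: sum_subtractf[symmetric] dvd_sum)
  then show ?thesis by presburger
qed

definition square :: "int ^ 'n \<Rightarrow> 'n \<times> bool \<Rightarrow> 'n \<times> bool \<Rightarrow> (int ^ 'n) set" where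
  "square x a b = {x, sshift x a, sshift x b, sshift (sshift x a) b}"

definition tetrahedron ::
    "int ^ 'n \<Rightarrow> 'n \<times> bool \<Rightarrow> 'n \<times> bool \<Rightarrow> 'n \<times> bool \<Rightarrow> (int ^ 'n) set" where
  "tetrahedron x a b c = {x, sshift (sshift x a) b, sshift (sshift x b) c, sshift (sshift x a) c}"

lemma square_eq: "square x a b = {x, x + unit_vec a, x + unit_vec b, x + unit_vec a + unit_vec b}"
  by (simp add: square_def sshift_eq_add)

lemma tetrahedron_eq: "tetrahedron x a b c =
    {x, x + unit_vec a + unit_vec b, x + unit_vec b + unit_vec c, x + unit_vec a + unit_vec c}"
  by (simp add: tetrahedron_def sshift_eq_add)

lemma norm1_add_unit_vec_le: "norm1 (unit_vec a + unit_vec b) \<le> 2"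
  using norm1_add_le[of "unit_vec a" "unit_vec b"] by simp

lemma vr_simplex_square: "vr_simplex 2 (square x a b)"
  unfolding vr_simplex_def square_eq
  by (auto simp: manh_eq_norm1 algebra_simps)
    (simp_all add: diff_conv_add_uminus uminus_unit_vec norm1_add_unit_vec_le)

lemma vr_simplex_tetrahedron: "vr_simplex 2 (tetrahedron x a b c)"
  unfolding vr_simplex_def tetrahedron_eq
  by (auto simp: manh_eq_norm1 algebra_simps)
    (simp_all add: diff_conv_add_uminus uminus_unit_vec norm1_add_unit_vec_le)

lemma vr_simplex_closed_nbhd: "vr_simplex 2 (closed_nbhd x)"
proof -
  have "closed_nbhd x \<subseteq> insert x (range (\<lambda>a. x + unit_vec a))"
  proof
    fix y assume "y \<in> closed_nbhd x"
    then have "manh x y = 0 \<or> manh x y = 1"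
      using manh_nonneg[of x y] by (auto simp: closed_nbhd_def)
    then show "y \<in> insert x (range (\<lambda>a. x + unit_vec a))"
      by (auto simp: manh_eq_0_iff elim: manh_eq_1E)
  qed
  then have "finite (closed_nbhd x)"
    by (rule finite_subset) simp
  moreover have "manh y z \<le> 2" if "y \<in> closed_nbhd x" "z \<in> closed_nbhd x" for y z
    using that manh_triangle[of y z x] manh_commute[of x y] by (simp add: closed_nbhd_def)
  moreover have "x \<in> closed_nbhd x"
    by (simp add: closed_nbhd_def)
  ultimately show ?thesis
    unfolding vr_simplex_def by blast
qed

lemma intersecting_pairs_star_or_triangle:
  assumes pairs: "\<And>X. X \<in> F \<Longrightarrow> \<exists>a b. X = {a, b}"
    and meet: "\<And>X Y. X \<in> F \<Longrightarrow> Y \<in> F \<Longrightarrow> X \<inter> Y \<noteq> {}"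
  shows "(\<exists>c. \<forall>X\<in>F. c \<in> X) \<or> (\<exists>a b c. distinct [a, b, c] \<and> F = {{a, b}, {b, c}, {a, c}})"
proof (cases "\<exists>c. \<forall>X\<in>F. c \<in> X")
  case no_star: False
  then obtain X where "X \<in> F"
    by blast
  then obtain a b where ab: "{a, b} \<in> F"
    by (metis pairs)
  have pair_through: "\<exists>g. X = {c, g}" if "X \<in> F" "c \<in> X" for X c
    using pairs[OF that(1)] that(2) by (metis insert_commute insert_iff singletonD)
  obtain Y where Y: "Y \<in> F" "a \<notin> Y"
    using no_star by blast
  with meet[OF ab] have "b \<in> Y"
    by blast
  with pair_through[OF Y(1)] obtain g where Yg: "Y = {b, g}"
    by blast
  obtain Z where Z: "Z \<in> F" "b \<notin> Z"
    using no_star by blast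
  with meet[OF ab] have "a \<in> Z"
    by blast
  with pair_through[OF Z(1)] obtain h where Zh: "Z = {a, h}"
    by blast
  have "g = h"
    using meet[OF Y(1) Z(1)] Y(2) Z(2) by (auto simp: Yg Zh)
  have abg: "distinct [a, b, g]"
    using Y(2) Z(2) by (auto simp: Yg Zh \<open>g = h\<close>)
  have "X \<in> {{a, b}, {b, g}, {a, g}}" if X: "X \<in> F" for X
  proof -
    obtain u v where "X = {u, v}"
      using pairs[OF X] by blast
    moreover have "X \<inter> {a, b} \<noteq> {}" "X \<inter> {b, g} \<noteq> {}" "X \<inter> {a, g} \<noteq> {}"
      using meet[OF X ab] meet[OF X Y(1)] meet[OF X Z(1)] by (simp_all add: Yg Zh \<open>g = h\<close>)
    ultimately show ?thesis
      using abg by auto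
  qed
  moreover have "{a, b} \<in> F" "{b, g} \<in> F" "{a, g} \<in> F"
    using ab Y(1) Z(1) by (simp_all add: Yg Zh \<open>g = h\<close>)
  ultimately have "F = {{a, b}, {b, g}, {a, g}}"
    by (intro equalityI subsetI) auto
  with abg show ?thesis
    by (intro disjI2 exI conjI)
qed simp

lemma manh_eq_1_if_parity_differs:
  assumes "manh x y \<le> 2" and "even (coord_sum x) \<noteq> even (coord_sum y)"
  shows "manh x y = 1"
proof -
  have "odd (manh x y)"
    using assms(2) by (simp add: even_manh_iff)
  with assms(1) manh_nonneg[of x y] show ?thesis
    by presburger
qed

lemma manh_eq_2_if_same_parity:
  assumes "manh x y \<le> 2" and "even (coord_sum x) = even (coord_sum y)" and "x \<noteq> y"
  shows "manh x y = 2"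
proof -
  have "even (manh x y)" "manh x y \<noteq> 0"
    using assms(2,3) by (simp_all add: even_manh_iff manh_eq_0_iff)
  with assms(1) manh_nonneg[of x y] show ?thesis
    by presburger
qed

lemma diameter_2_two_parities_cases:
  assumes diam: "\<forall>p\<in>S. \<forall>q\<in>S. manh p q \<le> 2" and "y \<in> S" "z \<in> S"
    and "even (coord_sum z) \<noteq> even (coord_sum y)"
  shows "(\<exists>x. S \<subseteq> closed_nbhd x) \<or> (\<exists>x a b. fst a \<noteq> fst b \<and> S \<subseteq> square x a b)"
proof -
  define P where "P = {t \<in> S. even (coord_sum t) = even (coord_sum y)}"
  define Q where "Q = S - P"
  have adjacent: "manh t s = 1" "manh s t = 1" if "t \<in> P" "s \<in> Q" for t s
    using that diam manh_commute[of t s]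
    by (auto simp: P_def Q_def intro!: manh_eq_1_if_parity_differs)
  have "y \<in> P" "z \<in> Q"
    using assms by (auto simp: P_def Q_def)
  consider "P \<subseteq> {y}" | "Q \<subseteq> {z}" | w v where "w \<in> P" "w \<noteq> y" "v \<in> Q" "v \<noteq> z"
    by blast
  then show ?thesis
  proof cases
    case 1
    have "S \<subseteq> closed_nbhd y"
    proof
      fix t assume "t \<in> S"
      with 1 have "t = y \<or> t \<in> Q"
        by (auto simp: Q_def)
      then show "t \<in> closed_nbhd y"
        using adjacent(1)[OF \<open>y \<in> P\<close>] by (auto simp: closed_nbhd_def)
    qed
    then show ?thesis by blast
  next
    case 2
    have "S \<subseteq> closed_nbhd z"
    proof
      fix t assume "t \<in> S"
      with 2 have "t = z \<or> t \<in> P"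
        by (auto simp: Q_def)
      then show "t \<in> closed_nbhd z"
        using adjacent(2)[OF _ \<open>z \<in> Q\<close>] by (auto simp: closed_nbhd_def)
    qed
    then show ?thesis by blast
  next
    case (3 w v)
    then have "manh y w = 2"
      using diam \<open>y \<in> P\<close> by (intro manh_eq_2_if_same_parity) (auto simp: P_def)
    then obtain a b where w: "w = y + unit_vec a + unit_vec b" and ab: "b \<noteq> opposite a"
      by (rule manh_eq_2E)
    have Q_sub: "Q \<subseteq> {y + unit_vec a, y + unit_vec b}"
      using common_neighbour[OF ab] adjacent(1) \<open>y \<in> P\<close> \<open>w \<in> P\<close> w by blast
    with 3 \<open>z \<in> Q\<close> have "a \<noteq> b" "y + unit_vec a \<in> Q" "y + unit_vec b \<in> Q"
      by auto
    \<comment> \<open>the points of the first class are common neighbours of y + e_a and y + e_b\<close>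
    have "y + unit_vec b = (y + unit_vec a) + unit_vec (opposite a) + unit_vec b"
      by (simp flip: uminus_unit_vec)
    then have "P \<subseteq> {y, y + unit_vec a + unit_vec b}"
      using common_neighbour[of b "opposite a" "y + unit_vec a"] \<open>a \<noteq> b\<close>
        adjacent(2)[OF _ \<open>y + unit_vec a \<in> Q\<close>] adjacent(2)[OF _ \<open>y + unit_vec b \<in> Q\<close>]
      by (force simp flip: uminus_unit_vec)
    with Q_sub have "S \<subseteq> square y a b"
      by (auto simp: square_eq Q_def)
    moreover have "fst a \<noteq> fst b"
      using ab \<open>a \<noteq> b\<close> by (simp add: fst_eq_iff)
    ultimately show ?thesis by blast
  qed
qed

lemma diameter_2_one_parity_cases:
  assumes diam: "\<forall>p\<in>S. \<forall>q\<in>S. manh p q \<le> 2" and "p \<in> S"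
    and parity: "\<forall>t\<in>S. even (coord_sum t) = even (coord_sum p)"
  shows "(\<exists>x. S \<subseteq> closed_nbhd x)
    \<or> (\<exists>x a b c. fst a \<noteq> fst b \<and> fst b \<noteq> fst c \<and> fst a \<noteq> fst c \<and> S \<subseteq> tetrahedron x a b c)"
proof -
  define F where "F = {{a, b} | a b. p + unit_vec a + unit_vec b \<in> S \<and> b \<noteq> opposite a}"
  have in_F: "\<exists>a' b'. {a, b} = {a', b'} \<and> p + unit_vec a' + unit_vec b' \<in> S \<and> b' \<noteq> opposite a'"
    if "{a, b} \<in> F" for a b
    using that by (auto simp: F_def)
  have decomp: "\<exists>a b. t = p + unit_vec a + unit_vec b \<and> {a, b} \<in> F" if "t \<in> S" "t \<noteq> p" for t
  proof -
    have "manh p t \<le> 2" "even (coord_sum p) = even (coord_sum t)"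
      using diam parity that \<open>p \<in> S\<close> by blast+
    then have "manh p t = 2"
      by (rule manh_eq_2_if_same_parity) (use that(2) in auto)
    then obtain a b where "t = p + unit_vec a + unit_vec b" "b \<noteq> opposite a"
      by (rule manh_eq_2E)
    with that show ?thesis
      unfolding F_def by blast
  qed
  have pairs: "\<exists>a b. X = {a, b}" if "X \<in> F" for X
    using that by (auto simp: F_def)
  have meet: "X \<inter> Y \<noteq> {}" if XF: "X \<in> F" and YF: "Y \<in> F" for X Y
  proof -
    obtain a b where X: "X = {a, b}" "p + unit_vec a + unit_vec b \<in> S" "b \<noteq> opposite a"
      using XF unfolding F_def by blast
    obtain e f where Y: "Y = {e, f}" "p + unit_vec e + unit_vec f \<in> S" "f \<noteq> opposite e"
      using YF unfolding F_def by blast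
    have "norm1 (unit_vec a + unit_vec b - (unit_vec e + unit_vec f)) \<le> 2"
      using diam X(2) Y(2) by (force simp: manh_eq_norm1 algebra_simps)
    then show ?thesis
      using unit_pairs_share X(1,3) Y(1,3) by blast
  qed
  have fst_neq: "fst a \<noteq> fst b" if "{a, b} \<in> F" "a \<noteq> b" for a b
    using in_F[OF that(1)] that(2) by (auto simp: doubleton_eq_iff fst_eq_iff opposite_eq_iff)
  have "(\<exists>c. \<forall>X\<in>F. c \<in> X) \<or> (\<exists>a b c. distinct [a, b, c] \<and> F = {{a, b}, {b, c}, {a, c}})"
    using pairs meet by (rule intersecting_pairs_star_or_triangle)
  then show ?thesis
  proof (elim disjE exE conjE)
    fix c assume star: "\<forall>X\<in>F. c \<in> X"
    have "S \<subseteq> closed_nbhd (p + unit_vec c)"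
    proof
      fix t assume "t \<in> S"
      show "t \<in> closed_nbhd (p + unit_vec c)"
      proof (cases "t = p")
        case True
        then show ?thesis
          by (simp add: closed_nbhd_def manh_eq_norm1 uminus_unit_vec)
      next
        case False
        then obtain a b where "t = p + unit_vec a + unit_vec b" "{a, b} \<in> F"
          using decomp \<open>t \<in> S\<close> by blast
        with star have "t = p + unit_vec c + unit_vec b \<or> t = p + unit_vec c + unit_vec a"
          by (auto simp: add_ac)
        then show ?thesis
          by (auto simp: closed_nbhd_def)
      qed
    qed
    then show ?thesis by blast
  next
    fix a b g assume abg: "distinct [a, b, g]" and F: "F = {{a, b}, {b, g}, {a, g}}"
    have "S \<subseteq> tetrahedron p a b g"
    proof
      fix t assume "t \<in> S"
      show "t \<in> tetrahedron p a b g"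
      proof (cases "t = p")
        case False
        then obtain e f where "t = p + unit_vec e + unit_vec f" "{e, f} \<in> F"
          using decomp \<open>t \<in> S\<close> by blast
        then show ?thesis
          by (auto simp: F tetrahedron_eq doubleton_eq_iff add_ac)
      qed (simp add: tetrahedron_eq)
    qed
    moreover have "{a, b} \<in> F" "{b, g} \<in> F" "{a, g} \<in> F"
      unfolding F by blast+
    then have "fst a \<noteq> fst b" "fst b \<noteq> fst g" "fst a \<noteq> fst g"
      using fst_neq abg by auto
    ultimately show ?thesis by blast
  qed
qed

lemma diameter_2_subset_cases:
  assumes diam: "\<forall>p\<in>S. \<forall>q\<in>S. manh p q \<le> 2" and "S \<noteq> {}"
  shows "(\<exists>x. S \<subseteq> closed_nbhd x)
    \<or> (\<exists>x a b. fst a \<noteq> fst b \<and> S \<subseteq> square x a b)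
    \<or> (\<exists>x a b c. fst a \<noteq> fst b \<and> fst b \<noteq> fst c \<and> fst a \<noteq> fst c \<and> S \<subseteq> tetrahedron x a b c)"
proof -
  obtain p where "p \<in> S"
    using assms(2) by blast
  show ?thesis
  proof (cases "\<forall>t\<in>S. even (coord_sum t) = even (coord_sum p)")
    case True
    then show ?thesis
      using diameter_2_one_parity_cases[OF diam \<open>p \<in> S\<close>] by blast
  next
    case False
    then obtain z where "z \<in> S" "even (coord_sum z) \<noteq> even (coord_sum p)"
      by blast
    then show ?thesis
      using diameter_2_two_parities_cases[OF diam \<open>p \<in> S\<close>] by blast
  qed
qed

theorem lemma4p1:
  fixes \<tau> :: "(int ^ 'n) set"
  assumes "CARD('n) \<ge> 3"
    and "vr_maximal_simplex 2 \<tau>"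
  shows "(\<exists>x. \<tau> = closed_nbhd x)
       \<or> (\<exists>x i0 j0. fst i0 \<noteq> fst j0 \<and>
            \<tau> = {x, sshift x i0, sshift x j0, sshift (sshift x i0) j0})
       \<or> (\<exists>x i0 j0 k0. fst i0 \<noteq> fst j0 \<and> fst j0 \<noteq> fst k0 \<and> fst i0 \<noteq> fst k0 \<and>
            \<tau> = {x, sshift (sshift x i0) j0, sshift (sshift x j0) k0, sshift (sshift x i0) k0})"
proof -
  have maximal: "\<sigma> = \<tau>" if "vr_simplex 2 \<sigma>" "\<tau> \<subseteq> \<sigma>" for \<sigma>
    using assms(2) that unfolding vr_maximal_simplex_def by blast
  have "\<forall>p\<in>\<tau>. \<forall>q\<in>\<tau>. manh p q \<le> 2" "\<tau> \<noteq> {}"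
    using assms(2) unfolding vr_maximal_simplex_def vr_simplex_def by blast+
  then consider x where "\<tau> \<subseteq> closed_nbhd x"
    | x a b where "fst a \<noteq> fst b" "\<tau> \<subseteq> square x a b"
    | x a b c where "fst a \<noteq> fst b" "fst b \<noteq> fst c" "fst a \<noteq> fst c" "\<tau> \<subseteq> tetrahedron x a b c"
    by (blast dest: diameter_2_subset_cases)
  then show ?thesis
  proof cases
    case 1
    then show ?thesis using maximal vr_simplex_closed_nbhd by metis
  next
    case 2
    then show ?thesis using maximal[OF vr_simplex_square] unfolding square_def by metis
  next
    case 3
    then show ?thesis using maximal[OF vr_simplex_tetrahedron] unfolding tetrahedron_def by metis
  qed
qed

end
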